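(* Let $V$ be a finite set, $\mu_1,\mu_2$ probability measures on $V$ and $\rho$ a coupling between them. Then $\rho$ is economic if and only if the flow $\sum_{x,y\in V,\,x\neq y}\rho(x,y)Q_{(x,y)}$ on the complete digraph on $V$ (edges all pairs $(x,y)$ with $x\ne y$) is acyclic.
   Context: A coupling is a probability measure $\rho$ on $V\times V$ with marginals $\mu_1,\mu_2$. A path from $x$ to $y$ is any sequence $(x_0,\dots,x_n)$ of elements of $V$ with $x_0=x$, $x_n=y$, $x_i\neq x_{i+1}$ (no constraint other than the endpoints). For such $\gamma$, $Q_\gamma(u,v)=1$ if $(u,v)=(x_i,x_{i+1})$ for some $i$ and $0$ otherwise; $Q_{(x,y)}$ is this for the one-edge path. A flow is a nonnegative function $Q$ on ordered pairs of distinct elements; $E(Q)=\{(u,v):Q(u,v)>0\}$; $Q$ is acyclic if $(V,E(Q))$ has no directed cycle. The coupling $\rho$ is economic if for each pair $x\neq y$ there exist finitely many paths $\gamma^i_{(x,y)}$ from $x$ to $y$ and weights $\rho^i(x,y)\ge0$ with $\sum_i\rho^i(x,y)=\rho(x,y)$ such that the flow $\sum_{x\neq y}\sum_i\rho^i(x,y)Q_{\gamma^i_{(x,y)}}$ is acyclic. *)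

theory Defs
  imports Complex_Main
begin

definition prob_on :: "'a set \<Rightarrow> ('a \<Rightarrow> real) \<Rightarrow> bool" where
  "prob_on V \<mu> \<longleftrightarrow> (\<forall>x\<in>V. \<mu> x \<ge> 0) \<and> (\<Sum>x\<in>V. \<mu> x) = 1"

definition coupling :: "'a set \<Rightarrow> ('a \<Rightarrow> real) \<Rightarrow> ('a \<Rightarrow> real) \<Rightarrow> ('a \<Rightarrow> 'a \<Rightarrow> real) \<Rightarrow> bool" where
  "coupling V \<mu>1 \<mu>2 \<rho> \<longleftrightarrow>
     (\<forall>x\<in>V. \<forall>y\<in>V. \<rho> x y \<ge> 0) \<and>
     (\<forall>x\<in>V. (\<Sum>y\<in>V. \<rho> x y) = \<mu>1 x) \<and>
     (\<forall>y\<in>V. (\<Sum>x\<in>V. \<rho> x y) = \<mu>2 y)"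

definition is_path :: "'a set \<Rightarrow> 'a \<Rightarrow> 'a \<Rightarrow> 'a list \<Rightarrow> bool" where
  "is_path V x y \<gamma> \<longleftrightarrow> \<gamma> \<noteq> [] \<and> set \<gamma> \<subseteq> V \<and> hd \<gamma> = x \<and> last \<gamma> = y \<and>
     (\<forall>i. Suc i < length \<gamma> \<longrightarrow> \<gamma> ! i \<noteq> \<gamma> ! Suc i)"

definition Qpath :: "'a list \<Rightarrow> 'a \<Rightarrow> 'a \<Rightarrow> real" where
  "Qpath \<gamma> u v = (if \<exists>i. Suc i < length \<gamma> \<and> \<gamma> ! i = u \<and> \<gamma> ! Suc i = v then 1 else 0)"

definition flow_edges :: "'a set \<Rightarrow> ('a \<Rightarrow> 'a \<Rightarrow> real) \<Rightarrow> ('a \<times> 'a) set" where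
  "flow_edges V Q = {(u,v). u \<in> V \<and> v \<in> V \<and> u \<noteq> v \<and> Q u v > 0}"

definition acyclic_flow :: "'a set \<Rightarrow> ('a \<Rightarrow> 'a \<Rightarrow> real) \<Rightarrow> bool" where
  "acyclic_flow V Q \<longleftrightarrow> acyclic (flow_edges V Q)"

definition economic :: "'a set \<Rightarrow> ('a \<Rightarrow> 'a \<Rightarrow> real) \<Rightarrow> bool" where
  "economic V \<rho> \<longleftrightarrow>
     (\<exists>P :: 'a \<Rightarrow> 'a \<Rightarrow> ('a list \<times> real) list.
        (\<forall>x\<in>V. \<forall>y\<in>V. x \<noteq> y \<longrightarrow>
            (\<forall>(\<gamma>, w) \<in> set (P x y). is_path V x y \<gamma> \<and> w \<ge> 0) \<and>
            (\<Sum>(\<gamma>, w) \<leftarrow> P x y. w) = \<rho> x y) \<and>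
        acyclic_flow V (\<lambda>u v. \<Sum>x\<in>V. \<Sum>y\<in>V - {x}. \<Sum>(\<gamma>, w) \<leftarrow> P x y. w * Qpath \<gamma> u v))"

end

theory Submission
  imports Defs
begin

text \<open>
  Every edge (u, v) of the direct flow carries mass \<rho>(u, v) > 0, so in any economic
  decomposition some path from u to v has positive weight; all its edges then carry
  positive flow, hence (u, v) lies in the transitive closure of the edges of the
  decomposed flow, and acyclicity passes to the direct flow. Conversely, the
  decomposition of \<rho>(x, y) into the single one-edge path [x, y] reproduces the direct
  flow.
\<close>

definition path_decomposition ::
    "'a set \<Rightarrow> ('a \<Rightarrow> 'a \<Rightarrow> real) \<Rightarrow> ('a \<Rightarrow> 'a \<Rightarrow> ('a list \<times> real) list) \<Rightarrow> bool" where
  "path_decomposition V \<rho> P \<longleftrightarrow>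
     (\<forall>x\<in>V. \<forall>y\<in>V. x \<noteq> y \<longrightarrow>
        (\<forall>(\<gamma>, w) \<in> set (P x y). is_path V x y \<gamma> \<and> w \<ge> 0) \<and>
        (\<Sum>(\<gamma>, w) \<leftarrow> P x y. w) = \<rho> x y)"

definition path_flow :: "'a set \<Rightarrow> ('a \<Rightarrow> 'a \<Rightarrow> ('a list \<times> real) list) \<Rightarrow> 'a \<Rightarrow> 'a \<Rightarrow> real" where
  "path_flow V P u v = (\<Sum>x\<in>V. \<Sum>y\<in>V - {x}. \<Sum>(\<gamma>, w) \<leftarrow> P x y. w * Qpath \<gamma> u v)"

definition direct_flow :: "'a set \<Rightarrow> ('a \<Rightarrow> 'a \<Rightarrow> real) \<Rightarrow> 'a \<Rightarrow> 'a \<Rightarrow> real" where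
  "direct_flow V \<rho> u v = (\<Sum>x\<in>V. \<Sum>y\<in>V - {x}. \<rho> x y * Qpath [x, y] u v)"

lemma economic_iff_path_decomposition:
  "economic V \<rho> \<longleftrightarrow> (\<exists>P. path_decomposition V \<rho> P \<and> acyclic_flow V (path_flow V P))"
  unfolding economic_def path_decomposition_def path_flow_def[abs_def] ..

lemma Qpath_nonneg: "0 \<le> Qpath \<gamma> u v"
  by (simp add: Qpath_def)

lemma Qpath_single_edge: "Qpath [x, y] u v = (if u = x \<and> v = y then 1 else 0)"
  by (auto simp: Qpath_def nth_Cons split: nat.splits)

lemma direct_flow_eq:
  assumes "finite V" "u \<in> V" "v \<in> V" "u \<noteq> v"
  shows "direct_flow V \<rho> u v = \<rho> u v"
proof -
  have "direct_flow V \<rho> u v = (\<Sum>x\<in>V. if x = u then \<rho> u v else 0)"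
    unfolding direct_flow_def
  proof (rule sum.cong)
    fix x assume "x \<in> V"
    show "(\<Sum>y\<in>V - {x}. \<rho> x y * Qpath [x, y] u v) = (if x = u then \<rho> u v else 0)"
      using assms by (simp add: Qpath_single_edge if_distrib cong: if_cong)
  qed simp
  also have "\<dots> = \<rho> u v"
    using assms by simp
  finally show ?thesis .
qed

lemma flow_edges_direct_flow:
  assumes "finite V"
  shows "flow_edges V (direct_flow V \<rho>) = {(x, y). x \<in> V \<and> y \<in> V \<and> x \<noteq> y \<and> \<rho> x y > 0}"
  using direct_flow_eq[OF assms] by (auto simp: flow_edges_def)

lemma path_flow_single_edges: "path_flow V (\<lambda>x y. [([x, y], \<rho> x y)]) = direct_flow V \<rho>"
  by (simp add: path_flow_def direct_flow_def fun_eq_iff)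

lemma path_decomposition_single_edges:
  assumes "\<forall>x\<in>V. \<forall>y\<in>V. 0 \<le> \<rho> x y"
  shows "path_decomposition V \<rho> (\<lambda>x y. [([x, y], \<rho> x y)])"
  using assms by (auto simp: path_decomposition_def is_path_def nth_Cons split: nat.splits)

lemma path_weight_le_path_flow:
  assumes "finite V" "path_decomposition V \<rho> P"
    and "x \<in> V" "y \<in> V" "x \<noteq> y" "(\<gamma>, w) \<in> set (P x y)"
  shows "w * Qpath \<gamma> u v \<le> path_flow V P u v"
proof -
  let ?term = "\<lambda>x y. \<Sum>(\<gamma>, w) \<leftarrow> P x y. w * Qpath \<gamma> u v"
  have term_nonneg: "0 \<le> w' * Qpath \<gamma>' u v"
    if "x' \<in> V" "y' \<in> V - {x'}" "(\<gamma>', w') \<in> set (P x' y')" for x' y' \<gamma>' w'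
    using assms(2) that by (fastforce simp: path_decomposition_def Qpath_nonneg)
  have pair_sum_nonneg: "0 \<le> ?term x' y'" if "x' \<in> V" "y' \<in> V - {x'}" for x' y'
    using term_nonneg[OF that] by (intro sum_list_nonneg) auto
  have "w * Qpath \<gamma> u v \<le> ?term x y"
    using assms(3-6) term_nonneg by (intro member_le_sum_list) force+
  also have "\<dots> \<le> (\<Sum>y'\<in>V - {x}. ?term x y')"
    using assms pair_sum_nonneg by (intro member_le_sum) auto
  also have "\<dots> \<le> path_flow V P u v"
    unfolding path_flow_def using assms pair_sum_nonneg
    by (intro member_le_sum[where f = "\<lambda>x'. \<Sum>y'\<in>V - {x'}. ?term x' y'"])
      (auto intro!: sum_nonneg)
  finally show ?thesis .
qed

lemma chain_hd_last_in_rtrancl: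
  assumes "\<forall>i. Suc i < length \<gamma> \<longrightarrow> (\<gamma> ! i, \<gamma> ! Suc i) \<in> E" "\<gamma> \<noteq> []"
  shows "(hd \<gamma>, last \<gamma>) \<in> E\<^sup>*"
  using assms
proof (induction \<gamma>)
  case Nil
  then show ?case by simp
next
  case (Cons a xs)
  show ?case
  proof (cases "xs = []")
    case True
    then show ?thesis by simp
  next
    case False
    have "(a, hd xs) \<in> E"
      using Cons.prems(1)[rule_format, of 0] False by (simp add: hd_conv_nth)
    moreover have "(hd xs, last xs) \<in> E\<^sup>*"
      using Cons.prems(1) False by (intro Cons.IH) auto
    ultimately show ?thesis
      using False by simp
  qed
qed

lemma positive_path_in_rtrancl:
  assumes "finite V" "path_decomposition V \<rho> P"
    and "x \<in> V" "y \<in> V" "x \<noteq> y" "(\<gamma>, w) \<in> set (P x y)" "w > 0"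
  shows "(x, y) \<in> (flow_edges V (path_flow V P))\<^sup>*"
proof -
  have path: "is_path V x y \<gamma>"
    using assms(2-6) by (fastforce simp: path_decomposition_def)
  have "(\<gamma> ! i, \<gamma> ! Suc i) \<in> flow_edges V (path_flow V P)" if "Suc i < length \<gamma>" for i
  proof -
    have "Qpath \<gamma> (\<gamma> ! i) (\<gamma> ! Suc i) = 1"
      using that by (auto simp: Qpath_def)
    then have "w \<le> path_flow V P (\<gamma> ! i) (\<gamma> ! Suc i)"
      using path_weight_le_path_flow[OF assms(1-6)] by (metis mult.right_neutral)
    then show ?thesis
      using path that assms(7) by (auto simp: flow_edges_def is_path_def dest: nth_mem)
  qed
  then show ?thesis
    using chain_hd_last_in_rtrancl[of \<gamma>] path by (simp add: is_path_def)
qed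

lemma sum_list_pos_imp_pos_member:
  fixes f :: "'b \<Rightarrow> 'c :: {ordered_comm_monoid_add, linorder}"
  assumes "0 < (\<Sum>z \<leftarrow> xs. f z)"
  shows "\<exists>z\<in>set xs. 0 < f z"
  using assms sum_list_nonpos[of "map f xs"] by (force simp: not_less)

lemma direct_flow_edges_subset_trancl:
  assumes "finite V" "path_decomposition V \<rho> P"
  shows "flow_edges V (direct_flow V \<rho>) \<subseteq> (flow_edges V (path_flow V P))\<^sup>+"
proof
  fix e
  assume "e \<in> flow_edges V (direct_flow V \<rho>)"
  then obtain u v where e: "e = (u, v)" "u \<in> V" "v \<in> V" "u \<noteq> v" "\<rho> u v > 0"
    using flow_edges_direct_flow[OF assms(1)] by blast
  then have "0 < (\<Sum>(\<gamma>, w) \<leftarrow> P u v. w)"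
    using assms(2) by (simp add: path_decomposition_def)
  then obtain \<gamma> w where "(\<gamma>, w) \<in> set (P u v)" "w > 0"
    using sum_list_pos_imp_pos_member[of "\<lambda>(\<gamma>, w). w"] by fastforce
  then have "(u, v) \<in> (flow_edges V (path_flow V P))\<^sup>*"
    using positive_path_in_rtrancl[OF assms] e by blast
  then show "e \<in> (flow_edges V (path_flow V P))\<^sup>+"
    using e by (simp add: rtrancl_eq_or_trancl)
qed

theorem lemma3p1:
  fixes V :: "'a set" and \<mu>1 \<mu>2 :: "'a \<Rightarrow> real" and \<rho> :: "'a \<Rightarrow> 'a \<Rightarrow> real"
  assumes "finite V"
    and "prob_on V \<mu>1" and "prob_on V \<mu>2"
    and "coupling V \<mu>1 \<mu>2 \<rho>"
  shows "economic V \<rho> \<longleftrightarrow>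
         acyclic_flow V (\<lambda>u v. \<Sum>x\<in>V. \<Sum>y\<in>V - {x}. \<rho> x y * Qpath [x, y] u v)"
proof -
  have "economic V \<rho> \<longleftrightarrow> acyclic_flow V (direct_flow V \<rho>)"
  proof
    assume "economic V \<rho>"
    then obtain P where P: "path_decomposition V \<rho> P" "acyclic (flow_edges V (path_flow V P))"
      by (auto simp: economic_iff_path_decomposition acyclic_flow_def)
    then have "acyclic ((flow_edges V (path_flow V P))\<^sup>+)"
      by (simp add: acyclic_def)
    then have "acyclic (flow_edges V (direct_flow V \<rho>))"
      using direct_flow_edges_subset_trancl[OF assms(1) P(1)] by (rule acyclic_subset)
    then show "acyclic_flow V (direct_flow V \<rho>)"
      by (simp add: acyclic_flow_def)
  next
    assume "acyclic_flow V (direct_flow V \<rho>)"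
    then have "acyclic_flow V (path_flow V (\<lambda>x y. [([x, y], \<rho> x y)]))"
      by (simp only: path_flow_single_edges)
    moreover have "path_decomposition V \<rho> (\<lambda>x y. [([x, y], \<rho> x y)])"
      using assms(4) by (intro path_decomposition_single_edges) (simp add: coupling_def)
    ultimately show "economic V \<rho>"
      unfolding economic_iff_path_decomposition by blast
  qed
  moreover have "direct_flow V \<rho> = (\<lambda>u v. \<Sum>x\<in>V. \<Sum>y\<in>V - {x}. \<rho> x y * Qpath [x, y] u v)"
    by (simp add: fun_eq_iff direct_flow_def)
  ultimately show ?thesis
    by simp
qed

end
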